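(* Let $A\subseteq\mathcal{R}$ be outer measurable and let $I$ be an interval in $\mathcal{R}$ with $I\cap A=\emptyset$. Then $A\cup I$ is outer measurable and $M_u(A\cup I)=M_u(A)+l(I)$.
   Context: $\mathcal{R}$ denotes the Levi-Civita field: functions $x:\mathbb{Q}\to\mathbb{R}$ with left-finite support, with componentwise addition and formal power series multiplication, ordered by $x>0$ iff $x\ne0$ and $x[\min\operatorname{supp}x]>0$; it is a non-Archimedean ordered field extension of $\mathbb{R}$, Cauchy complete in the order topology, in which all limits and series are taken (a series $\sum a_n$ converges iff $a_n\to0$). An interval is a set $[a,b],[a,b),(a,b]$ or $(a,b)$ with $a<b$ in $\mathcal{R}$, of length $l=b-a$. A cover of $A\subseteq\mathcal{R}$ is a sequence of intervals $(S_n)_{n\ge1}$ with $A\subseteq\bigcup_n S_n$ and $\sum_n l(S_n)$ convergent in $\mathcal{R}$. $A$ is called outer measurable if the infimum $\inf\{\sum_n l(S_n): (S_n)\text{ a cover of }A\}$ exists in $\mathcal{R}$; this infimum is then called the outer measure $M_u(A)$. *)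

theory Defs
  imports Complex_Main
begin

typedef lc = "{x :: rat \<Rightarrow> real. \<forall>q. finite {r. r < q \<and> x r \<noteq> 0}}"
  morphisms coeff Abs_lc
  by (rule exI[of _ "\<lambda>_. 0"]) simp

setup_lifting type_definition_lc

lemma lc_add_closed:
  assumes "\<forall>q. finite {r. r < q \<and> x r \<noteq> (0::real)}"
      and "\<forall>q. finite {r. r < q \<and> y r \<noteq> (0::real)}"
  shows "\<forall>q. finite {r. r < q \<and> x r + y r \<noteq> 0}"
proof
  fix q
  have "{r. r < q \<and> x r + y r \<noteq> 0} \<subseteq> {r. r < q \<and> x r \<noteq> 0} \<union> {r. r < q \<and> y r \<noteq> 0}"
    by auto
  then show "finite {r. r < q \<and> x r + y r \<noteq> 0}"
    using assms by (meson finite_Un finite_subset)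
qed

instantiation lc :: "{zero, plus, uminus, minus, ord}"
begin

lift_definition zero_lc :: lc is "\<lambda>_. 0" by simp

lift_definition plus_lc :: "lc \<Rightarrow> lc \<Rightarrow> lc" is "\<lambda>x y q. x q + y q"
  using lc_add_closed by blast

lift_definition uminus_lc :: "lc \<Rightarrow> lc" is "\<lambda>x q. - x q" by simp

definition minus_lc :: "lc \<Rightarrow> lc \<Rightarrow> lc" where
  "minus_lc x y = x + (- y)"

definition lc_pos :: "lc \<Rightarrow> bool" where
  "lc_pos x \<longleftrightarrow> (\<exists>q. coeff x q > 0 \<and> (\<forall>r<q. coeff x r = 0))"

definition less_lc :: "lc \<Rightarrow> lc \<Rightarrow> bool" where
  "less_lc x y \<longleftrightarrow> lc_pos (y - x)"

definition less_eq_lc :: "lc \<Rightarrow> lc \<Rightarrow> bool" where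
  "less_eq_lc x y \<longleftrightarrow> x < y \<or> x = y"

instance ..
end

definition lc_tendsto :: "(nat \<Rightarrow> lc) \<Rightarrow> lc \<Rightarrow> bool" where
  "lc_tendsto f L \<longleftrightarrow>
     (\<forall>a b. a < L \<and> L < b \<longrightarrow> (\<exists>N. \<forall>n\<ge>N. a < f n \<and> f n < b))"

primrec lc_psum :: "(nat \<Rightarrow> lc) \<Rightarrow> nat \<Rightarrow> lc" where
  "lc_psum f 0 = 0"
| "lc_psum f (Suc n) = lc_psum f n + f n"

definition lc_sums :: "(nat \<Rightarrow> lc) \<Rightarrow> lc \<Rightarrow> bool" where
  "lc_sums f s \<longleftrightarrow> lc_tendsto (lc_psum f) s"

text \<open>An interval is given by endpoints a < b and two flags saying whether the
  left/right endpoint is included.\<close>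
type_synonym lc_ivl = "lc \<times> lc \<times> bool \<times> bool"

definition ivl_set :: "lc \<Rightarrow> lc \<Rightarrow> bool \<Rightarrow> bool \<Rightarrow> lc set" where
  "ivl_set a b cl cr = {x. (if cl then a \<le> x else a < x) \<and> (if cr then x \<le> b else x < b)}"

definition ivl_ok :: "lc_ivl \<Rightarrow> bool" where
  "ivl_ok S \<longleftrightarrow> fst S < fst (snd S)"

definition ivl_of :: "lc_ivl \<Rightarrow> lc set" where
  "ivl_of S = ivl_set (fst S) (fst (snd S)) (fst (snd (snd S))) (snd (snd (snd S)))"

definition ivl_len :: "lc_ivl \<Rightarrow> lc" where
  "ivl_len S = fst (snd S) - fst S"

definition is_cover :: "(nat \<Rightarrow> lc_ivl) \<Rightarrow> lc set \<Rightarrow> bool" where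
  "is_cover S A \<longleftrightarrow> (\<forall>n. ivl_ok (S n)) \<and> A \<subseteq> (\<Union>n. ivl_of (S n))
      \<and> (\<exists>s. lc_sums (\<lambda>n. ivl_len (S n)) s)"

definition cover_sums :: "lc set \<Rightarrow> lc set" where
  "cover_sums A = {s. \<exists>S. is_cover S A \<and> lc_sums (\<lambda>n. ivl_len (S n)) s}"

definition is_inf_lc :: "lc set \<Rightarrow> lc \<Rightarrow> bool" where
  "is_inf_lc X m \<longleftrightarrow> (\<forall>x\<in>X. m \<le> x) \<and> (\<forall>m'. (\<forall>x\<in>X. m' \<le> x) \<longrightarrow> m' \<le> m)"

definition outer_measurable :: "lc set \<Rightarrow> bool" where
  "outer_measurable A \<longleftrightarrow> (\<exists>m. is_inf_lc (cover_sums A) m)"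

definition Mu :: "lc set \<Rightarrow> lc" where
  "Mu A = (THE m. is_inf_lc (cover_sums A) m)"

end

theory Submission
  imports Defs "HOL-Analysis.Continuum_Not_Denumerable"
begin

text \<open>
  Putting the interval \<open>I\<close> with endpoints \<open>a < b\<close> in front of a cover of \<open>A\<close> shows
  \<open>M\<^sub>u(A \<union> I) \<le> M\<^sub>u(A) + l(I)\<close>. Conversely, let \<open>(T\<^sub>n)\<close> be a cover of \<open>A \<union> I\<close> whose sum falls short of \<open>M\<^sub>u(A) + l(I)\<close> by
  \<open>\<delta> > 0\<close>. Beyond some \<open>N\<close> its terms are shorter than an \<open>\<eta>\<close> that is infinitesimal
  compared with \<open>\<delta>\<close>. Cutting \<open>I\<close> out of \<open>T\<^sub>0, \<dots>, T\<^sub>N\<^sub>-\<^sub>1\<close> and adding intervals of length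
  \<open>\<delta>/4\<close> at \<open>a\<close> and \<open>b\<close> gives a cover of \<open>A\<close>, so these \<open>N\<close> intervals meet \<open>I\<close> in total
  length at most \<open>l(I) - \<delta>/2\<close>. Hence they miss a subinterval of \<open>I\<close> of length at least
  \<open>\<delta>/2\<^sup>N\<^sup>+\<^sup>1\<close>, which is then covered by intervals infinitesimally short compared with it.
  Points of that subinterval at distinct real proportions therefore need distinct
  intervals, which injects the real interval \<open>(0, 1)\<close> into \<open>\<nat>\<close>.
\<close>

section \<open>The Levi-Civita field as an ordered real vector space\<close>

lemma coeff_plus [simp]: "coeff (x + y) q = coeff x q + coeff y q"
  by transfer simp

lemma coeff_uminus [simp]: "coeff (- x) q = - coeff x q"
  by transfer simp

lemma coeff_zero [simp]: "coeff 0 q = 0"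
  by transfer simp

lemma coeff_minus [simp]: "coeff (x - y) q = coeff x q - coeff y q"
  by (simp add: minus_lc_def)

lemma lc_eqI: "(\<And>q. coeff x q = coeff y q) \<Longrightarrow> x = y"
  by (metis coeff_inject ext)

instance lc :: ab_group_add
  by standard (auto intro!: lc_eqI simp: minus_lc_def)

lemma lc_exists_leading_coeff:
  assumes "x \<noteq> 0"
  shows "\<exists>e. coeff x e \<noteq> 0 \<and> (\<forall>r<e. coeff x r = 0)"
proof -
  obtain r0 where r0: "coeff x r0 \<noteq> 0"
    using assms lc_eqI by force
  define S where "S = {r. r < r0 \<and> coeff x r \<noteq> 0}"
  have "finite S"
    unfolding S_def using coeff[of x] by auto
  show ?thesis
  proof (cases "S = {}")
    case True
    then show ?thesis
      using r0 unfolding S_def by (intro exI[of _ r0]) auto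
  next
    case False
    define e where "e = Min S"
    have "e \<in> S"
      unfolding e_def using \<open>finite S\<close> False by simp
    moreover have "coeff x r = 0" if "r < e" for r
    proof (rule ccontr)
      assume "coeff x r \<noteq> 0"
      with that \<open>e \<in> S\<close> have "r \<in> S"
        unfolding S_def by auto
      then show False
        using Min_le[OF \<open>finite S\<close>] that unfolding e_def by fastforce
    qed
    ultimately show ?thesis
      unfolding S_def by auto
  qed
qed

lemma lc_pos_add: "lc_pos x \<Longrightarrow> lc_pos y \<Longrightarrow> lc_pos (x + y)"
  unfolding lc_pos_def
proof (elim exE conjE)
  fix e1 e2
  assume "0 < coeff x e1" "\<forall>r<e1. coeff x r = 0" "0 < coeff y e2" "\<forall>r<e2. coeff y r = 0"
  then show "\<exists>q. 0 < coeff (x + y) q \<and> (\<forall>r<q. coeff (x + y) r = 0)"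
    by (cases e1 e2 rule: linorder_cases) (auto intro: exI[of _ e1] exI[of _ e2])
qed

lemma not_lc_pos_both: "lc_pos x \<Longrightarrow> lc_pos (- x) \<Longrightarrow> False"
  unfolding lc_pos_def
proof (elim exE conjE)
  fix e1 e2
  assume "0 < coeff x e1" "\<forall>r<e1. coeff x r = 0" "0 < coeff (- x) e2" "\<forall>r<e2. coeff (- x) r = 0"
  then show False
    by (cases e1 e2 rule: linorder_cases) auto
qed

lemma lc_pos_trichotomy: "x \<noteq> 0 \<Longrightarrow> lc_pos x \<or> lc_pos (- x)"
proof -
  assume "x \<noteq> 0"
  then obtain e where e: "coeff x e \<noteq> 0" "\<forall>r<e. coeff x r = 0"
    using lc_exists_leading_coeff by blast
  show ?thesis
  proof (cases "0 < coeff x e")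
    case True
    then show ?thesis using e unfolding lc_pos_def by blast
  next
    case False
    then have "0 < coeff (- x) e" using e(1) by simp
    then show ?thesis using e(2) unfolding lc_pos_def by auto
  qed
qed

instance lc :: linordered_ab_group_add
proof
  fix x y z :: lc
  have antisym: "lc_pos (y - x) \<Longrightarrow> lc_pos (x - y) \<Longrightarrow> False" for x y :: lc
    using not_lc_pos_both[of "y - x"] by (simp add: minus_diff_eq)
  have irrefl: "\<not> lc_pos 0"
    unfolding lc_pos_def by simp
  show "(x < y) = (x \<le> y \<and> \<not> y \<le> x)"
    unfolding less_eq_lc_def less_lc_def using antisym[of x y] irrefl by auto
  show "x \<le> x"
    unfolding less_eq_lc_def by simp
  show "x \<le> y \<Longrightarrow> y \<le> z \<Longrightarrow> x \<le> z"
    unfolding less_eq_lc_def less_lc_def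
    using lc_pos_add[of "z - y" "y - x"] by (auto simp: algebra_simps)
  show "x \<le> y \<Longrightarrow> y \<le> x \<Longrightarrow> x = y"
    unfolding less_eq_lc_def less_lc_def using antisym[of x y] by auto
  show "x \<le> y \<Longrightarrow> z + x \<le> z + y"
    unfolding less_eq_lc_def less_lc_def by simp
  show "x \<le> y \<or> y \<le> x"
    unfolding less_eq_lc_def less_lc_def
    using lc_pos_trichotomy[of "y - x"] by (auto simp: minus_diff_eq)
qed

lemma zero_less_lc_iff: "0 < x \<longleftrightarrow> lc_pos x"
  unfolding less_lc_def by simp

instantiation lc :: real_vector
begin

lift_definition scaleR_lc :: "real \<Rightarrow> lc \<Rightarrow> lc" is "\<lambda>s x q. s * x q"
proof -
  fix s :: real and x :: "rat \<Rightarrow> real" and q :: rat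
  assume "\<And>q. finite {r. r < q \<and> x r \<noteq> 0}"
  then show "finite {r. r < q \<and> s * x r \<noteq> 0}"
    using finite_subset[of "{r. r < q \<and> s * x r \<noteq> 0}" "{r. r < q \<and> x r \<noteq> 0}"] by auto
qed

instance
  by standard (auto intro!: lc_eqI simp: scaleR_lc.rep_eq algebra_simps)

end

lemma coeff_scaleR [simp]: "coeff (s *\<^sub>R x) q = s * coeff x q"
  by (simp add: scaleR_lc.rep_eq)

lemma lc_scaleR_pos: "0 < s \<Longrightarrow> 0 < x \<Longrightarrow> 0 < s *\<^sub>R (x::lc)"
  unfolding zero_less_lc_iff lc_pos_def by (auto intro: mult_pos_pos)

instance lc :: ordered_real_vector
proof
  fix x y :: lc and a b :: real
  show "x \<le> y \<Longrightarrow> 0 \<le> a \<Longrightarrow> a *\<^sub>R x \<le> a *\<^sub>R y"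
    by (metis diff_ge_0_iff_ge le_less lc_scaleR_pos scaleR_right_diff_distrib scaleR_zero_left)
  show "a \<le> b \<Longrightarrow> 0 \<le> x \<Longrightarrow> a *\<^sub>R x \<le> b *\<^sub>R x"
    by (metis diff_ge_0_iff_ge le_less lc_scaleR_pos scaleR_left_diff_distrib scaleR_zero_right)
qed

lemma scaleR_pos_pos:
  fixes x :: "'a::ordered_real_vector"
  shows "0 < a \<Longrightarrow> 0 < x \<Longrightarrow> 0 < a *\<^sub>R x"
  using scaleR_nonneg_nonneg[of a x] by (auto simp: order.strict_iff_order)

text \<open>Shifting the support by \<open>1\<close> is multiplication by the positive infinitesimal supported on \<open>{1}\<close>.\<close>

lift_definition lc_shift :: "lc \<Rightarrow> lc" is "\<lambda>x q. x (q - 1)"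
proof -
  fix x :: "rat \<Rightarrow> real" and q :: rat
  assume "\<And>q. finite {r. r < q \<and> x r \<noteq> 0}"
  moreover have "{r. r < q \<and> x (r - 1) \<noteq> 0} = (\<lambda>r. r + 1) ` {r. r < q - 1 \<and> x r \<noteq> 0}"
    by (auto intro!: image_eqI[where x="_ - 1"])
  ultimately show "finite {r. r < q \<and> x (r - 1) \<noteq> 0}"
    by simp
qed

lemma exists_infinitesimal:
  assumes "0 < (d::lc)"
  shows "\<exists>\<eta>>0. \<forall>s>0. \<eta> < s *\<^sub>R d"
proof -
  obtain e where e: "0 < coeff d e" "\<forall>r<e. coeff d r = 0"
    using assms unfolding zero_less_lc_iff lc_pos_def by auto
  have "0 < lc_shift d"
    unfolding zero_less_lc_iff lc_pos_def
    using e by (intro exI[of _ "e + 1"]) (auto simp: lc_shift.rep_eq)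
  moreover have "lc_shift d < s *\<^sub>R d" if "s > 0" for s
    unfolding less_lc_def lc_pos_def
    using e that by (intro exI[of _ e]) (auto simp: lc_shift.rep_eq)
  ultimately show ?thesis by blast
qed

lemma lc_psum_eq_sum: "lc_psum f n = sum f {..<n}"
  by (induction n) auto

lemma lc_tendsto_add_const: "lc_tendsto f L \<Longrightarrow> lc_tendsto (\<lambda>n. c + f n) (c + L)"
  unfolding lc_tendsto_def
proof (intro allI impI)
  fix u v
  assume lim: "\<forall>u v. u < L \<and> L < v \<longrightarrow> (\<exists>N. \<forall>n\<ge>N. u < f n \<and> f n < v)"
    and "u < c + L \<and> c + L < v"
  then have "u - c < L \<and> L < v - c"
    by (auto simp: algebra_simps)
  then obtain N where "\<forall>n\<ge>N. u - c < f n \<and> f n < v - c"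
    using lim by blast
  then show "\<exists>N. \<forall>n\<ge>N. u < c + f n \<and> c + f n < v"
    by (auto simp: algebra_simps)
qed

lemma lc_tendsto_offset_iff: "lc_tendsto (\<lambda>n. f (n + k)) L \<longleftrightarrow> lc_tendsto f L"
  unfolding lc_tendsto_def
proof (intro iffI allI impI)
  fix u v
  assume "\<forall>u v. u < L \<and> L < v \<longrightarrow> (\<exists>N. \<forall>n\<ge>N. u < f (n + k) \<and> f (n + k) < v)"
    and "u < L \<and> L < v"
  then obtain N where N: "\<forall>n\<ge>N. u < f (n + k) \<and> f (n + k) < v"
    by blast
  show "\<exists>N. \<forall>n\<ge>N. u < f n \<and> f n < v"
  proof (intro exI allI impI)
    fix n
    assume "N + k \<le> n"
    then show "u < f n \<and> f n < v"
      using N[rule_format, of "n - k"] by auto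
  qed
qed (meson trans_le_add1)

lemma lc_sums_offset:
  assumes "lc_sums f s"
  shows "lc_sums (\<lambda>n. f (n + k)) (s - lc_psum f k)"
proof -
  have psum: "lc_psum (\<lambda>n. f (n + k)) = (\<lambda>j. - lc_psum f k + lc_psum f (j + k))"
  proof
    show "lc_psum (\<lambda>n. f (n + k)) j = - lc_psum f k + lc_psum f (j + k)" for j
      by (induction j) (auto simp: algebra_simps)
  qed
  have "lc_tendsto (\<lambda>j. - lc_psum f k + lc_psum f (j + k)) (- lc_psum f k + s)"
    using assms unfolding lc_sums_def
    by (intro lc_tendsto_add_const) (simp add: lc_tendsto_offset_iff)
  then show ?thesis
    unfolding lc_sums_def psum by simp
qed

lemma lc_sums_terms_eventually_less:
  assumes "lc_sums f s" "0 < e"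
  shows "\<exists>N. \<forall>n\<ge>N. f n < e"
proof -
  define h where "h = (1/2::real) *\<^sub>R e"
  have h: "0 < h" "h + h = e"
    using assms(2) scaleR_pos_pos[of "1/2" e] unfolding h_def
    by (simp_all add: scaleR_add_left[symmetric])
  then have "s - h < s \<and> s < s + h"
    by simp
  then obtain N where N: "\<forall>n\<ge>N. s - h < lc_psum f n \<and> lc_psum f n < s + h"
    using assms(1) unfolding lc_sums_def lc_tendsto_def by blast
  show ?thesis
  proof (intro exI allI impI)
    fix n
    assume "N \<le> n"
    then have "lc_psum f (Suc n) < s + h" "s - h < lc_psum f n"
      using N le_SucI by blast+
    then have "lc_psum f (Suc n) - lc_psum f n < (s + h) - (s - h)"
      by (rule diff_strict_mono)
    then show "f n < e"
      using h(2) by (simp add: algebra_simps)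
  qed
qed

definition prepend :: "'a list \<Rightarrow> (nat \<Rightarrow> 'a) \<Rightarrow> nat \<Rightarrow> 'a" where
  "prepend xs f n = (if n < length xs then xs ! n else f (n - length xs))"

lemma range_prepend: "range (prepend xs f) = set xs \<union> range f"
proof
  show "range (prepend xs f) \<subseteq> set xs \<union> range f"
    by (auto simp: prepend_def)
  show "set xs \<union> range f \<subseteq> range (prepend xs f)"
  proof (intro Un_least subsetI)
    fix y
    assume "y \<in> set xs"
    then obtain i where "i < length xs" "y = xs ! i"
      by (auto simp: in_set_conv_nth)
    then show "y \<in> range (prepend xs f)"
      by (intro range_eqI[of _ _ i]) (simp add: prepend_def)
  next
    fix y
    assume "y \<in> range f"
    then obtain n where "y = f n"
      by blast
    then show "y \<in> range (prepend xs f)"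
      by (intro range_eqI[of _ _ "n + length xs"]) (simp add: prepend_def)
  qed
qed

lemma lc_sums_prepend:
  assumes "lc_sums f s"
  shows "lc_sums (prepend xs f) (sum_list xs + s)"
proof -
  have "lc_psum (prepend xs f) (n + length xs) = sum_list xs + lc_psum f n" for n
  proof (induction n)
    case 0
    show ?case
      by (simp add: lc_psum_eq_sum sum_list_sum_nth atLeast0LessThan prepend_def)
  next
    case (Suc n)
    then show ?case
      by (simp add: prepend_def algebra_simps)
  qed
  then have "lc_tendsto (\<lambda>n. lc_psum (prepend xs f) (n + length xs)) (sum_list xs + s)"
    using lc_tendsto_add_const[of "lc_psum f" s "sum_list xs"] assms unfolding lc_sums_def by simp
  then show ?thesis
    unfolding lc_sums_def lc_tendsto_offset_iff .
qed

lemma Mu_eqI: "is_inf_lc (cover_sums A) m \<Longrightarrow> Mu A = m"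
  unfolding Mu_def is_inf_lc_def by (rule the_equality) (auto intro: order_antisym)

lemma is_inf_lc_translate:
  assumes "is_inf_lc X m" "\<forall>y\<in>Y. m + c \<le> y" "\<forall>x\<in>X. c + x \<in> Y"
  shows "is_inf_lc Y (m + c)"
  unfolding is_inf_lc_def
proof (intro conjI allI impI)
  show "\<forall>y\<in>Y. m + c \<le> y"
    by fact
  fix m'
  assume "\<forall>y\<in>Y. m' \<le> y"
  then have "\<forall>x\<in>X. m' - c \<le> x"
    using assms(3) by (auto simp: algebra_simps)
  then have "m' - c \<le> m"
    using assms(1) unfolding is_inf_lc_def by blast
  then show "m' \<le> m + c"
    by (simp add: algebra_simps)
qed

lemma ivl_set_bounds: "x \<in> ivl_set p q cp cq \<Longrightarrow> p \<le> x \<and> x \<le> q"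
  unfolding ivl_set_def by (auto split: if_splits)

lemma ivl_set_interior: "p < x \<Longrightarrow> x < q \<Longrightarrow> x \<in> ivl_set p q cp cq"
  unfolding ivl_set_def by auto

lemma cover_sums_prependI:
  assumes "\<forall>J\<in>set xs. ivl_ok J" "\<forall>n. ivl_ok (S n)" "lc_sums (\<lambda>n. ivl_len (S n)) s"
    and "A \<subseteq> (\<Union>J\<in>set xs. ivl_of J) \<union> (\<Union>n. ivl_of (S n))"
  shows "sum_list (map ivl_len xs) + s \<in> cover_sums A"
proof -
  let ?W = "prepend xs S"
  have "(\<lambda>n. ivl_len (?W n)) = prepend (map ivl_len xs) (\<lambda>n. ivl_len (S n))"
    by (simp add: prepend_def fun_eq_iff)
  then have "lc_sums (\<lambda>n. ivl_len (?W n)) (sum_list (map ivl_len xs) + s)"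
    using lc_sums_prepend[OF assms(3)] by simp
  moreover have "ivl_ok (?W n)" for n
  proof -
    have "?W n \<in> set xs \<union> range S"
      unfolding range_prepend[symmetric] by (rule rangeI)
    then show ?thesis
      using assms(1,2) by auto
  qed
  moreover have "(\<Union>n. ivl_of (?W n)) = \<Union> (ivl_of ` (set xs \<union> range S))"
    unfolding range_prepend[symmetric] by (simp only: image_image)
  then have "A \<subseteq> (\<Union>n. ivl_of (?W n))"
    using assms(4) by auto
  ultimately show ?thesis
    unfolding cover_sums_def is_cover_def by blast
qed

lemma cover_sums_union_interval:
  assumes "s \<in> cover_sums A" "a < b"
  shows "(b - a) + s \<in> cover_sums (A \<union> ivl_set a b cl cr)"
proof -
  obtain S where S: "is_cover S A" "lc_sums (\<lambda>n. ivl_len (S n)) s"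
    using assms(1) unfolding cover_sums_def by auto
  then have "A \<union> ivl_set a b cl cr \<subseteq> (\<Union>J\<in>set [(a, b, cl, cr)]. ivl_of J) \<union> (\<Union>n. ivl_of (S n))"
    unfolding is_cover_def ivl_of_def by auto
  then have "sum_list (map ivl_len [(a, b, cl, cr)]) + s \<in> cover_sums (A \<union> ivl_set a b cl cr)"
    using S assms(2) unfolding is_cover_def by (intro cover_sums_prependI) (simp_all add: ivl_ok_def)
  then show ?thesis
    by (simp add: ivl_len_def)
qed

section \<open>Gaps left by finitely many intervals\<close>

definition overlap_len :: "'a::linordered_ab_group_add \<Rightarrow> 'a \<Rightarrow> 'a \<Rightarrow> 'a \<Rightarrow> 'a" where
  "overlap_len a b p q = max a (min q b) - max a (min p b)"

lemma overlap_len_split: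
  fixes a a' b' b p q :: "'a::linordered_ab_group_add"
  assumes "a \<le> a'" "a' \<le> b'" "b' \<le> b" "p \<le> q"
  shows "overlap_len a a' p q + overlap_len b' b p q \<le> overlap_len a b p q"
  using assms unfolding overlap_len_def by (auto simp: max_def min_def algebra_simps)

lemma exists_piece_with_room:
  fixes P Q :: "nat \<Rightarrow> 'a::linordered_ab_group_add"
  assumes PQ: "\<forall>n. P n \<le> Q n" and "a \<le> b" "p \<le> q"
    and room: "(\<Sum>n<N. overlap_len a b (P n) (Q n)) + overlap_len a b p q + (w + w) \<le> b - a"
  shows "\<exists>c d. a \<le> c \<and> c \<le> d \<and> d \<le> b \<and> (\<Sum>n<N. overlap_len c d (P n) (Q n)) + w \<le> d - c
           \<and> (\<forall>x. c < x \<and> x < d \<longrightarrow> \<not> (p \<le> x \<and> x \<le> q))"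
proof -
  define a' where "a' = max a (min p b)"
  define b' where "b' = max a (min q b)"
  have o: "a \<le> a'" "a' \<le> b'" "b' \<le> b"
    using assms(2,3) unfolding a'_def b'_def by (auto simp: max_def min_def)
  define SL where "SL = (\<Sum>n<N. overlap_len a a' (P n) (Q n))"
  define SR where "SR = (\<Sum>n<N. overlap_len b' b (P n) (Q n))"
  have "SL + SR \<le> (\<Sum>n<N. overlap_len a b (P n) (Q n))"
    unfolding SL_def SR_def sum.distrib[symmetric]
    using overlap_len_split[OF o] PQ by (intro sum_mono) blast
  then have "SL + SR + (b' - a') + (w + w) \<le> b - a"
    using room unfolding overlap_len_def a'_def b'_def
    by (meson add_right_mono order_trans)
  then have "(SL + w) + (SR + w) \<le> (a' - a) + (b - b')"
    by (simp add: algebra_simps)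
  then have "SL + w \<le> a' - a \<or> SR + w \<le> b - b'"
    using add_strict_mono by (metis not_le)
  moreover have "\<not> (p \<le> x \<and> x \<le> q)" if "a < x" "x < a'" for x
    using that unfolding a'_def by (auto simp: less_max_iff_disj)
  moreover have "\<not> (p \<le> x \<and> x \<le> q)" if "b' < x" "x < b" for x
    using that unfolding b'_def by (auto simp: min_less_iff_disj)
  moreover have "a' \<le> b" "a \<le> b'"
    using o by (meson order_trans)+
  ultimately show ?thesis
    using o unfolding SL_def SR_def by blast
qed

lemma exists_gap:
  fixes P Q :: "nat \<Rightarrow> 'a::{linordered_ab_group_add, ordered_real_vector}"
  assumes PQ: "\<forall>n. P n \<le> Q n"
    and "a \<le> b" "0 < w" "(\<Sum>n<N. overlap_len a b (P n) (Q n)) + w \<le> b - a"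
  shows "\<exists>g h. a \<le> g \<and> g < h \<and> h \<le> b \<and> w \<le> 2 ^ N *\<^sub>R (h - g)
           \<and> (\<forall>n<N. \<forall>x. g < x \<and> x < h \<longrightarrow> \<not> (P n \<le> x \<and> x \<le> Q n))"
  using assms(2-)
proof (induction N arbitrary: a b w)
  case 0
  then have "a < b"
    using less_le_trans[of 0 w "b - a"] by simp
  then show ?case
    using 0 by (intro exI[of _ a] exI[of _ b]) auto
next
  case (Suc N)
  define v where "v = (1/2::real) *\<^sub>R w"
  have v: "0 < v" "v + v = w"
    using Suc.prems(2) scaleR_pos_pos[of "1/2" w] unfolding v_def
    by (simp_all add: scaleR_add_left[symmetric])
  have "(\<Sum>n<N. overlap_len a b (P n) (Q n)) + overlap_len a b (P N) (Q N) + (v + v) \<le> b - a"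
    using Suc.prems(3) by (simp add: v(2))
  then obtain c d where cd: "a \<le> c" "c \<le> d" "d \<le> b" "(\<Sum>n<N. overlap_len c d (P n) (Q n)) + v \<le> d - c"
      "\<forall>x. c < x \<and> x < d \<longrightarrow> \<not> (P N \<le> x \<and> x \<le> Q N)"
    using exists_piece_with_room[OF PQ Suc.prems(1) PQ[rule_format, of N]] by blast
  obtain g h where gh: "c \<le> g" "g < h" "h \<le> d" "v \<le> 2 ^ N *\<^sub>R (h - g)"
      "\<forall>n<N. \<forall>x. g < x \<and> x < h \<longrightarrow> \<not> (P n \<le> x \<and> x \<le> Q n)"
    using Suc.IH[OF cd(2) v(1) cd(4)] by blast
  have "w = 2 *\<^sub>R v"
    using v(2) by (simp add: scaleR_2)
  also have "\<dots> \<le> 2 *\<^sub>R (2 ^ N *\<^sub>R (h - g))"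
    using gh(4) by (rule scaleR_left_mono) simp
  finally have "w \<le> 2 ^ Suc N *\<^sub>R (h - g)"
    by simp
  moreover have "a \<le> g" "h \<le> b"
    using gh cd by (meson order_trans)+
  moreover have "\<not> (P n \<le> x \<and> x \<le> Q n)" if "n < Suc N" "g < x" "x < h" for n x
  proof (cases "n = N")
    case True
    then show ?thesis
      using cd(5) gh(1,3) that by (meson le_less_trans less_le_trans)
  next
    case False
    then show ?thesis
      using gh(5) that by simp
  qed
  ultimately show ?case
    using gh(2) by blast
qed

lemma interval_not_covered_by_infinitesimals:
  fixes g h \<eta> :: "'a::{linordered_ab_group_add, ordered_real_vector}" and P Q :: "nat \<Rightarrow> 'a"
  assumes "g < h" and small: "\<forall>s>0. \<eta> < s *\<^sub>R (h - g)"
    and cover: "\<forall>x. g < x \<and> x < h \<longrightarrow> (\<exists>n. P n \<le> x \<and> x \<le> Q n \<and> Q n - P n < \<eta>)"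
  shows False
proof -
  define X where "X s = g + s *\<^sub>R (h - g)" for s :: real
  have X_mem: "g < X s \<and> X s < h" if "0 < s" "s < 1" for s
    using scaleR_pos_pos[of s "h - g"] scaleR_pos_pos[of "1 - s" "h - g"] that \<open>g < h\<close>
    unfolding X_def by (auto simp: algebra_simps scaleR_left_diff_distrib)
  define idx where "idx s = (SOME n. P n \<le> X s \<and> X s \<le> Q n \<and> Q n - P n < \<eta>)" for s
  have idx: "P (idx s) \<le> X s \<and> X s \<le> Q (idx s) \<and> Q (idx s) - P (idx s) < \<eta>"
    if "0 < s" "s < 1" for s
    unfolding idx_def by (rule someI_ex) (use cover X_mem[OF that] in blast)
  have "idx s1 \<noteq> idx s2" if "0 < s1" "s1 < s2" "s2 < 1" for s1 s2
  proof
    assume eq: "idx s1 = idx s2"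
    have "X s2 - X s1 \<le> Q (idx s1) - P (idx s1)"
      using idx[of s1] idx[of s2] that eq by (intro diff_mono) auto
    also have "\<dots> < \<eta>"
      using idx[of s1] that by auto
    also have "\<dots> < (s2 - s1) *\<^sub>R (h - g)"
      using small that by simp
    also have "\<dots> = X s2 - X s1"
      unfolding X_def by (simp add: scaleR_left_diff_distrib)
    finally show False
      by simp
  qed
  then have "inj_on idx {0<..<1}"
    by (intro inj_onI) (metis greaterThanLessThan_iff linorder_neqE_linordered_idom)
  then have "countable {0<..<(1::real)}"
    unfolding countable_def by blast
  then show False
    using uncountable_open_interval[of 0 1] by simp
qed

lemma cover_head_overlap_gt:
  fixes T :: "nat \<Rightarrow> lc_ivl" and N :: nat
  assumes ok: "\<forall>n. ivl_ok (T n)" and cover: "ivl_set a b cl cr \<subseteq> (\<Union>n. ivl_of (T n))"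
    and "a \<le> b" "0 < w" and small: "\<forall>s>0. \<eta> < s *\<^sub>R w" and tail: "\<forall>n\<ge>N. ivl_len (T n) < \<eta>"
  shows "b - a < (\<Sum>n<N. overlap_len a b (fst (T n)) (fst (snd (T n)))) + w"
proof (rule ccontr)
  define P where "P n = fst (T n)" for n
  define Q where "Q n = fst (snd (T n))" for n
  have PQ: "\<forall>n. P n \<le> Q n"
    using ok unfolding ivl_ok_def P_def Q_def by (simp add: less_imp_le)
  assume "\<not> ?thesis"
  then have "(\<Sum>n<N. overlap_len a b (P n) (Q n)) + w \<le> b - a"
    unfolding P_def Q_def by simp
  then obtain g h where gh: "a \<le> g" "g < h" "h \<le> b" "w \<le> 2 ^ N *\<^sub>R (h - g)"
      "\<forall>n<N. \<forall>x. g < x \<and> x < h \<longrightarrow> \<not> (P n \<le> x \<and> x \<le> Q n)"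
    using exists_gap[OF PQ \<open>a \<le> b\<close> \<open>0 < w\<close>] by blast
  have "\<eta> < s *\<^sub>R (h - g)" if "s > 0" for s
  proof -
    have "\<eta> < (s / 2 ^ N) *\<^sub>R w"
      using small that by simp
    also have "\<dots> \<le> (s / 2 ^ N) *\<^sub>R (2 ^ N *\<^sub>R (h - g))"
      using gh(4) that by (intro scaleR_left_mono) auto
    finally show ?thesis
      by simp
  qed
  moreover have "\<exists>n. P n \<le> x \<and> x \<le> Q n \<and> Q n - P n < \<eta>" if "g < x" "x < h" for x
  proof -
    have "x \<in> ivl_set a b cl cr"
      using le_less_trans[OF gh(1) that(1)] less_le_trans[OF that(2) gh(3)] by (rule ivl_set_interior)
    then obtain n where "x \<in> ivl_of (T n)"
      using cover by auto
    then have x_in: "P n \<le> x" "x \<le> Q n"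
      using ivl_set_bounds unfolding ivl_of_def P_def Q_def by auto
    moreover have "N \<le> n"
      using gh(5) that x_in by (meson not_le)
    ultimately show ?thesis
      using tail unfolding ivl_len_def P_def Q_def by auto
  qed
  ultimately show False
    using interval_not_covered_by_infinitesimals[OF gh(2)] by blast
qed

section \<open>Excising an interval from a cover\<close>

definition ivl_below :: "lc \<Rightarrow> lc_ivl \<Rightarrow> lc_ivl" where
  "ivl_below a J = (case J of (p, q, cp, cq) \<Rightarrow> (p, max p (min q a), cp, q \<le> a \<and> cq))"

definition ivl_above :: "lc \<Rightarrow> lc_ivl \<Rightarrow> lc_ivl" where
  "ivl_above b J = (case J of (p, q, cp, cq) \<Rightarrow> (min q (max p b), q, b \<le> p \<and> cp, cq))"

lemma ivl_below_covers:
  assumes "ivl_ok J" "x \<in> ivl_of J" "x < a"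
  shows "ivl_ok (ivl_below a J) \<and> x \<in> ivl_of (ivl_below a J)"
  using assms
  by (cases J) (auto simp: ivl_below_def ivl_ok_def ivl_of_def ivl_set_def max_def min_def split: if_splits)

lemma ivl_above_covers:
  assumes "ivl_ok J" "x \<in> ivl_of J" "b < x"
  shows "ivl_ok (ivl_above b J) \<and> x \<in> ivl_of (ivl_above b J)"
  using assms
  by (cases J) (auto simp: ivl_above_def ivl_ok_def ivl_of_def ivl_set_def max_def min_def split: if_splits)

lemma ivl_len_below_above:
  assumes "ivl_ok J" "a < b"
  shows "ivl_len (ivl_below a J) + ivl_len (ivl_above b J)
           = ivl_len J - overlap_len a b (fst J) (fst (snd J))"
  using assms
  by (cases J) (auto simp: ivl_below_def ivl_above_def ivl_ok_def ivl_len_def overlap_len_def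
      min_def max_def algebra_simps)

lemma ivl_len_below_above_degenerate:
  assumes "ivl_ok J" "K \<in> {ivl_below a J, ivl_above b J}" "\<not> ivl_ok K"
  shows "ivl_len K = 0"
  using assms
  by (cases J) (auto simp: ivl_below_def ivl_above_def ivl_ok_def ivl_len_def min_def max_def)

text \<open>The intervals of length \<open>\<epsilon>\<close> at \<open>a\<close> and \<open>b\<close> are needed because \<open>I\<close> may be open.\<close>

lemma excised_pieces_cover:
  assumes "ivl_ok J" "x \<in> ivl_of J" "x \<notin> ivl_set a b cl cr" "0 < \<epsilon>"
  shows "\<exists>K\<in>{(a - \<epsilon>, a, True, True), (b, b + \<epsilon>, True, True)}
           \<union> set (filter ivl_ok [ivl_below a J, ivl_above b J]). x \<in> ivl_of K"
proof -
  consider "x = a" | "x = b" | "x < a" | "b < x"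
    using assms(3) ivl_set_interior by (metis linorder_neqE)
  then show ?thesis
  proof cases
    case 1
    then have "x \<in> ivl_of (a - \<epsilon>, a, True, True)"
      using \<open>0 < \<epsilon>\<close> by (simp add: ivl_of_def ivl_set_def)
    then show ?thesis
      by (intro bexI) auto
  next
    case 2
    then have "x \<in> ivl_of (b, b + \<epsilon>, True, True)"
      using \<open>0 < \<epsilon>\<close> by (simp add: ivl_of_def ivl_set_def)
    then show ?thesis
      by (intro bexI) auto
  next
    case 3
    then show ?thesis
      using ivl_below_covers[OF assms(1,2)] by (intro bexI) auto
  next
    case 4
    then show ?thesis
      using ivl_above_covers[OF assms(1,2)] by (intro bexI) auto
  qed
qed

lemma cover_sums_excise:
  assumes T: "is_cover T A" "lc_sums (\<lambda>n. ivl_len (T n)) t"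
    and "a < b" "A \<inter> ivl_set a b cl cr = {}" "0 < \<epsilon>"
  shows "t + (\<epsilon> + \<epsilon>) - (\<Sum>n<N. overlap_len a b (fst (T n)) (fst (snd (T n)))) \<in> cover_sums A"
proof -
  define pieces where "pieces n = filter ivl_ok [ivl_below a (T n), ivl_above b (T n)]" for n
  define xs where "xs = (a - \<epsilon>, a, True, True) # (b, b + \<epsilon>, True, True) # concat (map pieces [0..<N])"
  have T_ok: "ivl_ok (T n)" for n
    using T(1) unfolding is_cover_def by simp
  have cover: "A \<subseteq> (\<Union>J\<in>set xs. ivl_of J) \<union> (\<Union>n. ivl_of (T (n + N)))"
  proof
    fix x
    assume "x \<in> A"
    then obtain n where n: "x \<in> ivl_of (T n)"
      using T(1) unfolding is_cover_def by auto
    show "x \<in> (\<Union>J\<in>set xs. ivl_of J) \<union> (\<Union>n. ivl_of (T (n + N)))"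
    proof (cases "N \<le> n")
      case True
      then show ?thesis
        using n by (intro UnI2 UN_I[of "n - N"]) auto
    next
      case False
      then have "{(a - \<epsilon>, a, True, True), (b, b + \<epsilon>, True, True)} \<union> set (pieces n) \<subseteq> set xs"
        unfolding xs_def by auto
      moreover have "x \<notin> ivl_set a b cl cr"
        using assms(4) \<open>x \<in> A\<close> by blast
      then obtain K where "K \<in> {(a - \<epsilon>, a, True, True), (b, b + \<epsilon>, True, True)} \<union> set (pieces n)"
          "x \<in> ivl_of K"
        using excised_pieces_cover[OF T_ok n _ \<open>0 < \<epsilon>\<close>] unfolding pieces_def by blast
      ultimately show ?thesis
        by auto
    qed
  qed
  have "ivl_ok (a - \<epsilon>, a, True, True)" "ivl_ok (b, b + \<epsilon>, True, True)"
    using \<open>0 < \<epsilon>\<close> by (simp_all add: ivl_ok_def)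
  moreover have "ivl_ok J" if "J \<in> set (pieces n)" for J n
    using that unfolding pieces_def set_filter by simp
  ultimately have "\<forall>J\<in>set xs. ivl_ok J"
    unfolding xs_def by auto
  then have "sum_list (map ivl_len xs) + (t - lc_psum (\<lambda>n. ivl_len (T n)) N) \<in> cover_sums A"
    using T_ok lc_sums_offset[OF T(2)] cover by (intro cover_sums_prependI) auto
  moreover have "sum_list (map ivl_len (pieces n))
      = ivl_len (T n) - overlap_len a b (fst (T n)) (fst (snd (T n)))" for n
    unfolding pieces_def
    using ivl_len_below_above_degenerate[OF T_ok, where a = a and b = b] ivl_len_below_above[OF T_ok \<open>a < b\<close>]
    by (subst sum_list_map_filter) auto
  then have "sum_list (map ivl_len (concat (map pieces [0..<N])))
      = lc_psum (\<lambda>n. ivl_len (T n)) N - (\<Sum>n<N. overlap_len a b (fst (T n)) (fst (snd (T n))))"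
    by (induction N) (auto simp: algebra_simps)
  ultimately show ?thesis
    by (simp add: xs_def ivl_len_def algebra_simps)
qed

lemma cover_sums_union_interval_ge:
  assumes m: "is_inf_lc (cover_sums A) m" and "a < b" and disj: "ivl_set a b cl cr \<inter> A = {}"
    and "t \<in> cover_sums (A \<union> ivl_set a b cl cr)"
  shows "m + (b - a) \<le> t"
proof (rule ccontr)
  assume short: "\<not> ?thesis"
  obtain T where T: "is_cover T (A \<union> ivl_set a b cl cr)" "lc_sums (\<lambda>n. ivl_len (T n)) t"
    using assms(4) unfolding cover_sums_def by auto
  define \<epsilon> where "\<epsilon> = (1/4::real) *\<^sub>R (m + (b - a) - t)"
  have "0 < \<epsilon>"
    using short scaleR_pos_pos[of "1/4" "m + (b - a) - t"] unfolding \<epsilon>_def by simp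
  then obtain \<eta> where "0 < \<eta>" and small: "\<forall>s>0. \<eta> < s *\<^sub>R (\<epsilon> + \<epsilon>)"
    using exists_infinitesimal by (meson add_pos_pos)
  obtain N where tail: "\<forall>n\<ge>N. ivl_len (T n) < \<eta>"
    using lc_sums_terms_eventually_less[OF T(2) \<open>0 < \<eta>\<close>] by blast
  let ?S = "\<Sum>n<N. overlap_len a b (fst (T n)) (fst (snd (T n)))"
  have "is_cover T A"
    using T(1) unfolding is_cover_def by blast
  then have "t + (\<epsilon> + \<epsilon>) - ?S \<in> cover_sums A"
    using cover_sums_excise T(2) \<open>a < b\<close> disj \<open>0 < \<epsilon>\<close> by blast
  then have "m \<le> t + (\<epsilon> + \<epsilon>) - ?S"
    using m unfolding is_inf_lc_def by blast
  then have "?S + (\<epsilon> + \<epsilon>) \<le> t + (\<epsilon> + \<epsilon> + \<epsilon> + \<epsilon>) - m"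
    by (simp add: algebra_simps)
  also have "\<epsilon> + \<epsilon> + \<epsilon> + \<epsilon> = m + (b - a) - t"
    unfolding \<epsilon>_def by (simp flip: scaleR_add_left)
  finally have "?S + (\<epsilon> + \<epsilon>) \<le> b - a"
    by (simp add: algebra_simps)
  moreover have "b - a < ?S + (\<epsilon> + \<epsilon>)"
    using T(1) \<open>a < b\<close> \<open>0 < \<epsilon>\<close> small tail unfolding is_cover_def
    by (intro cover_head_overlap_gt) auto
  ultimately show False
    by simp
qed

theorem mainTheorem6:
  fixes A :: "lc set" and a b :: lc and cl cr :: bool
  assumes "outer_measurable A"
    and "a < b"
    and "ivl_set a b cl cr \<inter> A = {}"
  shows "outer_measurable (A \<union> ivl_set a b cl cr)
         \<and> Mu (A \<union> ivl_set a b cl cr) = Mu A + (b - a)"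
proof -
  obtain m where m: "is_inf_lc (cover_sums A) m"
    using assms(1) unfolding outer_measurable_def by blast
  have "is_inf_lc (cover_sums (A \<union> ivl_set a b cl cr)) (m + (b - a))"
    using cover_sums_union_interval_ge[OF m assms(2,3)] cover_sums_union_interval[OF _ assms(2)]
    by (intro is_inf_lc_translate[OF m]) auto
  then show ?thesis
    using Mu_eqI[OF m] Mu_eqI unfolding outer_measurable_def by blast
qed

end
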